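(* Let $1<p\le2$, $T>0$, and let $\gamma_0,\gamma_1,\gamma_2,\gamma_3,\Lambda>0$ and $\theta\in(0,1]$ be given. Then there exist $\bar k\in(0,1]$, $\bar\gamma_0>0$ and $\gamma_4,\gamma_5>0$ (independent of $\lambda$) such that the following holds. Let $M\in\mathbb N$, $k=T/M\in(0,\bar k)$, $h\in(0,1/\sqrt{\gamma_0})$ with $h^2<\bar\gamma_0 k$, $\lambda\in[0,\Lambda]$, and let $(a_m)_{m=0}^M,(b_m)_{m=0}^M$ be non-negative sequences and $(r_m)_{m=0}^M,(s_m)_{m=0}^M$ sequences with $$a_0^2\le\gamma_0h^2,\quad b_0^2\le\gamma_0h^2,\quad k\sum_{m=0}^Mr_m^2\le\gamma_0h^2,\quad k\sum_{m=0}^Ms_m^2\le\gamma_0h^2,$$ and such that for all $1\le m\le M$ $$\frac{a_m^2-a_{m-1}^2}{k}+\gamma_1(\lambda+b_m)^{p-2}b_m^2\le b_mr_m+\gamma_2b_{m-1}b_m+s_m^2,$$ $$\frac{a_m^2-a_{m-1}^2}{k}+\gamma_1(\lambda+b_m)^{p-2}b_m^2\le b_mr_m+\gamma_3b_mb_{m-1}^{1-\theta}a_m^\theta+s_m^2.$$ Then $\max_{1\le m\le M}b_m\le1$ and $$\max_{1\le m\le M}a_m^2+\gamma_1(\lambda+\Lambda)^{p-2}\,k\sum_{m=1}^Mb_m^2\le\gamma_4h^2\exp(2\gamma_5kM).$$ *)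

theory Defs
  imports Complex_Main
begin

text \<open>Real power with the mathematical convention x^0 = 1 (also for x = 0);
  Isabelle's powr has 0 powr y = 0 for all y.\<close>
definition rpow :: "real \<Rightarrow> real \<Rightarrow> real" where
  "rpow x y = (if y = 0 then 1 else x powr y)"

end

theory Submission
  imports Defs
begin

(* Put c = \<gamma>1 (\<Lambda> + 1)^(p-2). While b_m \<le> 1 the degenerate weight \<gamma>1 (\<lambda> + b_m)^(p-2) dominates c,
   and Young's inequality turns b_(m-1)^(1-\<theta>) a_m^\<theta> into \<delta> b_(m-1) + K a_m. After absorbing the
   b-terms, the second inequality becomes a one-step energy inequality; summing it and applying a
   discrete Gronwall lemma gives a_j\<^sup>2 + (3c/8) k \<Sigma> b_m\<^sup>2 \<le> A h\<^sup>2 exp(2Dkj), and since h\<^sup>2 < \<epsilon> k this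
   forces b_m to be small. The a priori bound b_m \<le> 1 comes from the first inequality: for b_m > 1
   the weight still dominates c b_m, whereas the right-hand side is at most c b_m/2 + c/4 because
   b_(m-1), r_m, s_m and a_(m-1)\<^sup>2/k are small. Both bounds are propagated together by induction
   on m. *)

lemma rpow_interpolation_le:
  fixes x y \<theta> \<delta> :: real
  assumes x: "0 \<le> x" and y: "0 \<le> y" and \<theta>: "0 < \<theta>" "\<theta> \<le> 1" and \<delta>: "0 < \<delta>"
  shows "rpow x (1 - \<theta>) * rpow y \<theta> \<le> \<delta> * x + \<delta> powr (1 - 1/\<theta>) * y"
proof (cases "\<theta> = 1")
  case True
  then show ?thesis using x y \<delta> by (simp add: rpow_def)
next
  case False
  hence \<theta>1: "\<theta> < 1" using \<theta> by simp
  have rpow_eq: "rpow x (1 - \<theta>) * rpow y \<theta> = x powr (1 - \<theta>) * y powr \<theta>"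
    using \<theta> \<theta>1 by (simp add: rpow_def)
  \<comment> \<open>the product is at most the larger of the two terms on the right\<close>
  show ?thesis
  proof (cases "y \<le> \<delta> powr (1/\<theta>) * x")
    case True
    have "y powr \<theta> \<le> (\<delta> powr (1/\<theta>) * x) powr \<theta>"
      using True y \<theta> by (simp add: powr_mono2)
    also have "\<dots> = \<delta> * x powr \<theta>"
      using \<delta> x \<theta> by (simp add: powr_mult powr_powr)
    finally have "x powr (1 - \<theta>) * y powr \<theta> \<le> x powr (1 - \<theta>) * (\<delta> * x powr \<theta>)"
      by (simp add: mult_left_mono)
    also have "\<dots> \<le> \<delta> * x"
      using x by (cases "x = 0") (simp_all add: powr_add[symmetric] mult.left_commute)
    finally show ?thesis using rpow_eq y \<delta> by (smt (verit) mult_nonneg_nonneg powr_ge_zero)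
  next
    case False
    hence y_pos: "0 < y" using x \<delta> by (smt (verit) mult_nonneg_nonneg powr_ge_zero)
    have "\<delta> powr (-1/\<theta>) * (\<delta> powr (1/\<theta>) * x) \<le> \<delta> powr (-1/\<theta>) * y"
      using False by (intro mult_left_mono) auto
    moreover have "\<delta> powr (-1/\<theta>) * \<delta> powr (1/\<theta>) = 1"
      using \<delta> by (simp add: powr_add[symmetric])
    ultimately have "x \<le> \<delta> powr (-1/\<theta>) * y" by (simp add: mult.assoc[symmetric])
    hence "x powr (1 - \<theta>) \<le> (\<delta> powr (-1/\<theta>) * y) powr (1 - \<theta>)"
      using x \<theta>1 by (simp add: powr_mono2)
    also have "\<dots> = \<delta> powr (1 - 1/\<theta>) * y powr (1 - \<theta>)"
    proof -
      have "(-1/\<theta>) * (1 - \<theta>) = 1 - 1/\<theta>" using \<theta> by (simp add: field_simps)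
      then show ?thesis using \<delta> y \<theta> by (simp add: powr_mult powr_powr)
    qed
    finally have "x powr (1 - \<theta>) * y powr \<theta> \<le> \<delta> powr (1 - 1/\<theta>) * y powr (1 - \<theta>) * y powr \<theta>"
      by (simp add: mult_right_mono)
    also have "\<dots> = \<delta> powr (1 - 1/\<theta>) * y"
      using y_pos by (simp add: mult.assoc powr_add[symmetric])
    finally show ?thesis using rpow_eq x \<delta> by (smt (verit) mult_nonneg_nonneg)
  qed
qed

lemma rpow_antimono_nonpos:
  fixes x y q :: real
  assumes "q \<le> 0" "0 < x" "x \<le> y"
  shows "rpow y q \<le> rpow x q"
  using assms by (simp add: rpow_def powr_mono2')

lemma degenerate_weight_ge_small:
  fixes p lam L b g :: real
  assumes "p \<le> 2" "0 \<le> lam" "lam \<le> L" "0 \<le> b" "b \<le> 1" "0 \<le> g"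
  shows "g * (L + 1) powr (p - 2) * b\<^sup>2 \<le> g * rpow (lam + b) (p - 2) * b\<^sup>2"
proof (cases "b = 0")
  case False
  have "rpow (L + 1) (p - 2) \<le> rpow (lam + b) (p - 2)"
    using assms False by (intro rpow_antimono_nonpos) auto
  moreover have "(L + 1) powr (p - 2) = rpow (L + 1) (p - 2)"
    using assms by (simp add: rpow_def)
  ultimately show ?thesis using assms by (intro mult_right_mono mult_left_mono) auto
qed simp

lemma degenerate_weight_ge_large:
  fixes p lam L b g :: real
  assumes "1 \<le> p" "p \<le> 2" "0 \<le> lam" "lam \<le> L" "1 \<le> b" "0 \<le> g"
  shows "g * (L + 1) powr (p - 2) * b \<le> g * rpow (lam + b) (p - 2) * b\<^sup>2"
proof -
  have b_pos: "0 < b" using assms by simp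
  have "(L + 1) powr (p - 2) * b = ((L + 1) * b) powr (p - 2) * b powr (3 - p)"
    using b_pos assms by (simp add: powr_mult mult.assoc powr_add[symmetric])
  also have "\<dots> \<le> ((L + 1) * b) powr (p - 2) * b\<^sup>2"
  proof -
    have "b powr (3 - p) \<le> b powr 2" using assms by (intro powr_mono) auto
    also have "\<dots> = b\<^sup>2" using b_pos by (simp add: powr_realpow)
    finally show ?thesis by (intro mult_left_mono) auto
  qed
  also have "\<dots> \<le> rpow (lam + b) (p - 2) * b\<^sup>2"
  proof -
    have "lam + b \<le> (L + 1) * b"
      using assms mult_left_mono[of 1 b L] by (simp add: algebra_simps)
    then have "rpow ((L + 1) * b) (p - 2) \<le> rpow (lam + b) (p - 2)"
      using assms by (intro rpow_antimono_nonpos) auto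
    moreover have "((L + 1) * b) powr (p - 2) = rpow ((L + 1) * b) (p - 2)"
      using assms by (simp add: rpow_def)
    ultimately show ?thesis by (intro mult_right_mono) auto
  qed
  finally show ?thesis using assms by (simp add: mult.assoc mult_left_mono)
qed

lemma discrete_gronwall:
  fixes x :: "nat \<Rightarrow> real" and A q :: real
  assumes x: "\<And>j. 0 \<le> x j" and A: "0 \<le> A" and q: "0 \<le> q" "q \<le> 1/2"
    and ineq: "\<And>j. j \<in> {1..n} \<Longrightarrow> x j \<le> A + q * (\<Sum>i=1..j. x i)"
    and j: "j \<le> n"
  shows "A + q * (\<Sum>i=1..j. x i) \<le> A * exp (2 * q * real j)"
proof -
  have geometric: "2*A + 2*q*(\<Sum>i=1..j. x i) \<le> 2*A*(1 + 2*q)^j" if "j \<le> n" for j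
    using that
  proof (induction j)
    case (Suc j)
    let ?S = "\<Sum>i=1..j. x i"
    have "x (Suc j) \<le> A + q * (?S + x (Suc j))" using ineq[of "Suc j"] Suc.prems by simp
    moreover have "2*q*x (Suc j) \<le> x (Suc j)"
      using q x[of "Suc j"] mult_right_mono[of "2*q" 1 "x (Suc j)"] by simp
    ultimately have "x (Suc j) \<le> 2*A + 2*q*?S" by (simp add: algebra_simps)
    hence "2*q*x (Suc j) \<le> 2*q*(2*A + 2*q*?S)" using q by (intro mult_left_mono) auto
    hence "2*A + 2*q*(\<Sum>i=1..Suc j. x i) \<le> (2*A + 2*q*?S) * (1 + 2*q)"
      by (simp add: algebra_simps)
    also have "\<dots> \<le> 2*A*(1 + 2*q)^j * (1 + 2*q)" using Suc q by (intro mult_right_mono) auto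
    finally show ?case by (simp add: algebra_simps)
  qed simp
  have "(1 + 2*q)^j \<le> exp (2*q)^j" using q by (intro power_mono) (auto simp: exp_ge_add_one_self)
  also have "\<dots> = exp (2 * q * real j)" by (simp add: exp_of_nat_mult[symmetric] mult.commute)
  finally have "2*A*(1 + 2*q)^j \<le> 2*A*exp (2 * q * real j)" using A by (intro mult_left_mono) auto
  with geometric[OF j] show ?thesis by linarith
qed

lemma energy_step:
  fixes k c \<gamma> \<delta> K a a' b b' r s :: real
  assumes k: "0 < k" and c: "0 < c" and \<gamma>: "0 < \<gamma>" and \<delta>: "\<delta> = c / (4 * \<gamma>)"
    and ineq: "(a\<^sup>2 - a'\<^sup>2)/k + c*b\<^sup>2 \<le> b*r + \<gamma>*b*(\<delta>*b' + K*a) + s\<^sup>2"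
  shows "a\<^sup>2 - a'\<^sup>2 + k*(c/2)*b\<^sup>2 - k*(c/8)*b'\<^sup>2 \<le> k*(2*(\<gamma>*K)\<^sup>2/c)*a\<^sup>2 + k*(r\<^sup>2/c + s\<^sup>2)"
proof -
  \<comment> \<open>three weighted Young inequalities, written as expanded squares\<close>
  have "0 \<le> (c*b - 2*r)\<^sup>2 / (4*c)" using c by simp
  also have "\<dots> = c/4*b\<^sup>2 + r\<^sup>2/c - b*r"
    using c by (simp add: field_simps power2_eq_square)
  finally have young_r: "b*r \<le> c/4*b\<^sup>2 + r\<^sup>2/c" by simp
  have "0 \<le> c/8 * (b - b')\<^sup>2" using c by simp
  also have "\<dots> = c/8*b\<^sup>2 + c/8*b'\<^sup>2 - \<gamma>*b*(\<delta>*b')"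
    using \<delta> \<gamma> by (simp add: field_simps power2_eq_square)
  finally have young_b': "\<gamma>*b*(\<delta>*b') \<le> c/8*b\<^sup>2 + c/8*b'\<^sup>2" by simp
  have "0 \<le> (c*b - 4*\<gamma>*K*a)\<^sup>2 / (8*c)" using c by simp
  also have "\<dots> = c/8*b\<^sup>2 + (2*(\<gamma>*K)\<^sup>2/c)*a\<^sup>2 - \<gamma>*b*(K*a)"
    using c by (simp add: field_simps power2_eq_square)
  finally have young_a: "\<gamma>*b*(K*a) \<le> c/8*b\<^sup>2 + (2*(\<gamma>*K)\<^sup>2/c)*a\<^sup>2" by simp
  have "(a\<^sup>2 - a'\<^sup>2)/k \<le> (2*(\<gamma>*K)\<^sup>2/c)*a\<^sup>2 + (r\<^sup>2/c + s\<^sup>2) - (c/2)*b\<^sup>2 + (c/8)*b'\<^sup>2"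
    using ineq young_r young_b' young_a by (simp add: algebra_simps)
  then have "k*((a\<^sup>2 - a'\<^sup>2)/k) \<le> k*((2*(\<gamma>*K)\<^sup>2/c)*a\<^sup>2 + (r\<^sup>2/c + s\<^sup>2) - (c/2)*b\<^sup>2 + (c/8)*b'\<^sup>2)"
    using k by (intro mult_left_mono) auto
  moreover have "k*((a\<^sup>2 - a'\<^sup>2)/k) = a\<^sup>2 - a'\<^sup>2" using k by simp
  ultimately show ?thesis by (simp add: algebra_simps)
qed

lemma sum_energy_steps:
  fixes x y g :: "nat \<Rightarrow> real" and k c D :: real
  assumes "\<And>m. m \<in> {1..n} \<Longrightarrow>
    x m - x (m-1) + k*(c/2)*y m - k*(c/8)*y (m-1) \<le> k*D*x m + k*g m"
  shows "x n + k*(c/2)*(\<Sum>m=1..n. y m) - k*(c/8)*(\<Sum>m<n. y m)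
    \<le> x 0 + k*D*(\<Sum>m=1..n. x m) + k*(\<Sum>m=1..n. g m)"
  using assms
proof (induction n)
  case (Suc n)
  have "x n + k*(c/2)*(\<Sum>m=1..n. y m) - k*(c/8)*(\<Sum>m<n. y m)
    \<le> x 0 + k*D*(\<Sum>m=1..n. x m) + k*(\<Sum>m=1..n. g m)"
    using Suc by auto
  moreover have "x (Suc n) - x n + k*(c/2)*y (Suc n) - k*(c/8)*y n \<le> k*D*x (Suc n) + k*g (Suc n)"
    using Suc.prems[of "Suc n"] by simp
  ultimately show ?case by (simp add: distrib_left)
qed simp

lemma scaled_sum_subset_le:
  fixes f :: "nat \<Rightarrow> real"
  assumes "finite B" "S \<subseteq> B" "0 \<le> k" "k * (\<Sum>m\<in>B. (f m)\<^sup>2) \<le> C"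
  shows "k * (\<Sum>m\<in>S. (f m)\<^sup>2) \<le> C"
proof -
  have "(\<Sum>m\<in>S. (f m)\<^sup>2) \<le> (\<Sum>m\<in>B. (f m)\<^sup>2)" using assms by (intro sum_mono2) auto
  then show ?thesis using assms by (meson mult_left_mono order_trans)
qed

lemma le_one_of_energy_ineq:
  fixes \<beta> \<beta>' a a' r s k c w \<gamma> :: real
  assumes ineq: "(a\<^sup>2 - a'\<^sup>2)/k + w*\<beta>\<^sup>2 \<le> \<beta>*r + \<gamma>*\<beta>'*\<beta> + s\<^sup>2"
    and weight: "1 < \<beta> \<Longrightarrow> c*\<beta> \<le> w*\<beta>\<^sup>2"
    and "0 \<le> \<beta>" "0 < k" "0 < c"
    and r: "\<bar>r\<bar> \<le> c/4" and \<beta>': "\<gamma>*\<beta>' \<le> c/4" and small: "a'\<^sup>2/k + s\<^sup>2 \<le> c/4"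
  shows "\<beta> \<le> 1"
proof (rule ccontr)
  assume "\<not> \<beta> \<le> 1"
  then have \<beta>_gt: "1 < \<beta>" by simp
  have "(a\<^sup>2 - a'\<^sup>2)/k \<ge> - (a'\<^sup>2/k)"
    using \<open>0 < k\<close> by (simp add: diff_divide_distrib)
  then have "c*\<beta> \<le> \<beta>*r + \<gamma>*\<beta>'*\<beta> + s\<^sup>2 + a'\<^sup>2/k" using ineq weight[OF \<beta>_gt] by linarith
  moreover have "\<beta>*r \<le> c*\<beta>/4"
    using mult_left_mono[OF r \<open>0 \<le> \<beta>\<close>] mult_left_mono[OF abs_ge_self \<open>0 \<le> \<beta>\<close>, of r]
    by (simp add: mult.commute)
  moreover have "\<gamma>*\<beta>'*\<beta> \<le> c*\<beta>/4" using mult_right_mono[OF \<beta>' \<open>0 \<le> \<beta>\<close>] by simp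
  moreover have "c/4 < c*\<beta>/4" "0 < c*\<beta>" using \<beta>_gt \<open>0 < c\<close> by simp_all
  ultimately show False using small by linarith
qed

locale stability_constants =
  fixes p T \<gamma>0 \<gamma>1 \<gamma>2 \<gamma>3 \<Lambda> \<theta> :: real
  assumes p: "1 < p" "p \<le> 2" and T: "0 < T"
    and \<gamma>: "0 < \<gamma>0" "0 < \<gamma>1" "0 < \<gamma>2" "0 < \<gamma>3" and \<Lambda>: "0 < \<Lambda>"
    and \<theta>: "0 < \<theta>" "\<theta> \<le> 1"
begin

(* kbar, \<epsilon>, \<gamma>4 and D are the witnesses for kbar, \<gamma>0bar, \<gamma>4 and \<gamma>5 in the theorem. *)
definition c :: real where "c = \<gamma>1 * (\<Lambda> + 1) powr (p - 2)"
definition \<delta> :: real where "\<delta> = c / (4 * \<gamma>3)"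
definition K :: real where "K = \<delta> powr (1 - 1/\<theta>)"
definition D :: real where "D = 2 * (\<gamma>3 * K)\<^sup>2 / c"
definition A :: real where "A = \<gamma>0 * (2 + c/8 + 1/c)"
definition E :: real where "E = exp (2 * D * T)"
definition \<eta> :: real where "\<eta> = min 1 (c / (4 * \<gamma>2))"
definition \<epsilon> :: real where
  "\<epsilon> = min (min (c\<^sup>2 / (16 * \<gamma>0)) (\<eta>\<^sup>2 / \<gamma>0)) (min (c / (4 * (\<gamma>0 + A * E))) (3 * c * \<eta>\<^sup>2 / (8 * A * E)))"
definition kbar :: real where "kbar = min 1 (1 / (2 * D))"
definition \<gamma>4 :: real where "\<gamma>4 = (1 + 8 * \<gamma>1 * \<Lambda> powr (p - 2) / (3 * c)) * A"

lemma c_pos: "0 < c" and \<delta>_pos: "0 < \<delta>" and D_pos: "0 < D" and A_pos: "0 < A"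
  and E_ge_1: "1 \<le> E" and \<eta>_pos: "0 < \<eta>" and \<eta>_le_1: "\<eta> \<le> 1" and \<gamma>2_\<eta>_le: "\<gamma>2 * \<eta> \<le> c/4"
proof -
  show c: "0 < c" using \<gamma> \<Lambda> by (simp add: c_def)
  show \<delta>: "0 < \<delta>" using c \<gamma> by (simp add: \<delta>_def)
  show D: "0 < D" using c \<delta> \<gamma> by (simp add: D_def K_def)
  show "0 < A" using c \<gamma> by (simp add: A_def add_pos_pos)
  show "1 \<le> E" using D T by (simp add: E_def)
  show "0 < \<eta>" "\<eta> \<le> 1" "\<gamma>2 * \<eta> \<le> c/4" using c \<gamma> by (auto simp: \<eta>_def min_def field_simps)
qed

lemma \<epsilon>_pos: "0 < \<epsilon>"
  using c_pos \<eta>_pos A_pos E_ge_1 \<gamma> by (simp add: \<epsilon>_def add_pos_pos)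

lemma \<gamma>0_\<epsilon>_le: "\<gamma>0 * \<epsilon> \<le> c\<^sup>2/16" "\<gamma>0 * \<epsilon> \<le> \<eta>\<^sup>2"
  and \<gamma>0_AE_\<epsilon>_le: "(\<gamma>0 + A*E) * \<epsilon> \<le> c/4"
  and AE_\<epsilon>_le: "8*A*E*\<epsilon> \<le> 3*c*\<eta>\<^sup>2"
proof -
  have AE: "0 < A*E" using A_pos E_ge_1 by simp
  have \<epsilon>_le: "\<epsilon> \<le> c\<^sup>2/(16*\<gamma>0)" "\<epsilon> \<le> \<eta>\<^sup>2/\<gamma>0" "\<epsilon> \<le> c/(4*(\<gamma>0 + A*E))" "\<epsilon> \<le> 3*c*\<eta>\<^sup>2/(8*A*E)"
    by (simp_all add: \<epsilon>_def)
  show "\<gamma>0 * \<epsilon> \<le> c\<^sup>2/16" "\<gamma>0 * \<epsilon> \<le> \<eta>\<^sup>2" using \<epsilon>_le \<gamma> by (simp_all add: field_simps)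
  show "(\<gamma>0 + A*E) * \<epsilon> \<le> c/4" using \<epsilon>_le(3) \<gamma> AE by (simp add: field_simps add_pos_pos)
  show "8*A*E*\<epsilon> \<le> 3*c*\<eta>\<^sup>2" using \<epsilon>_le(4) AE by (simp add: field_simps)
qed

lemma kbar_pos: "0 < kbar" and kbar_le_1: "kbar \<le> 1"
  using D_pos by (auto simp: kbar_def)

lemma \<gamma>4_pos: "0 < \<gamma>4"
  using \<gamma> c_pos A_pos by (simp add: \<gamma>4_def add_pos_nonneg)

end

locale stability_data = stability_constants +
  fixes M :: nat and k h lam :: real and a b r s :: "nat \<Rightarrow> real"
  assumes k_eq: "k = T / real M" and k_pos: "0 < k" and k_lt_kbar: "k < kbar"
    and h_sq_lt: "h\<^sup>2 < \<epsilon> * k"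
    and lam: "0 \<le> lam" "lam \<le> \<Lambda>"
    and nonneg: "\<forall>m\<in>{0..M}. 0 \<le> a m \<and> 0 \<le> b m"
    and a0: "(a 0)\<^sup>2 \<le> \<gamma>0 * h\<^sup>2" and b0: "(b 0)\<^sup>2 \<le> \<gamma>0 * h\<^sup>2"
    and r_sum: "k * (\<Sum>m=0..M. (r m)\<^sup>2) \<le> \<gamma>0 * h\<^sup>2"
    and s_sum: "k * (\<Sum>m=0..M. (s m)\<^sup>2) \<le> \<gamma>0 * h\<^sup>2"
    and ineq1: "\<forall>m\<in>{1..M}.
         ((a m)\<^sup>2 - (a (m-1))\<^sup>2) / k + \<gamma>1 * rpow (lam + b m) (p - 2) * (b m)\<^sup>2
           \<le> b m * r m + \<gamma>2 * b (m-1) * b m + (s m)\<^sup>2"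
    and ineq2: "\<forall>m\<in>{1..M}.
         ((a m)\<^sup>2 - (a (m-1))\<^sup>2) / k + \<gamma>1 * rpow (lam + b m) (p - 2) * (b m)\<^sup>2
           \<le> b m * r m + \<gamma>3 * b m * rpow (b (m-1)) (1 - \<theta>) * rpow (a m) \<theta> + (s m)\<^sup>2"
begin

lemma M_pos: "0 < M"
  using k_eq k_pos by (cases M) auto

lemma k_mult_M: "k * real M = T"
  using k_eq M_pos by simp

lemma k_le_1: "k \<le> 1" and k_D_le: "k * D \<le> 1/2"
  using k_lt_kbar D_pos by (auto simp: kbar_def field_simps)

lemma r_sq_le: "m \<in> {0..M} \<Longrightarrow> (r m)\<^sup>2 \<le> \<gamma>0 * \<epsilon>"
  and s_sq_le: "m \<in> {0..M} \<Longrightarrow> (s m)\<^sup>2 \<le> \<gamma>0 * \<epsilon>"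
proof -
  assume m: "m \<in> {0..M}"
  have "\<gamma>0 * h\<^sup>2 \<le> k * (\<gamma>0 * \<epsilon>)"
    using h_sq_lt \<gamma> by (simp add: mult_left_mono mult.commute mult.left_commute)
  moreover have "k * (r m)\<^sup>2 \<le> \<gamma>0 * h\<^sup>2" "k * (s m)\<^sup>2 \<le> \<gamma>0 * h\<^sup>2"
    using scaled_sum_subset_le[OF _ _ _ r_sum, of "{m}"] scaled_sum_subset_le[OF _ _ _ s_sum, of "{m}"]
      m k_pos by auto
  ultimately have "k * (r m)\<^sup>2 \<le> k * (\<gamma>0 * \<epsilon>)" "k * (s m)\<^sup>2 \<le> k * (\<gamma>0 * \<epsilon>)" by linarith+
  then show "(r m)\<^sup>2 \<le> \<gamma>0 * \<epsilon>" "(s m)\<^sup>2 \<le> \<gamma>0 * \<epsilon>" using k_pos by simp_all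
qed

lemma forcing_sum_le:
  assumes "i \<le> M"
  shows "k*(\<Sum>m=1..i. (r m)\<^sup>2/c + (s m)\<^sup>2) \<le> \<gamma>0*h\<^sup>2/c + \<gamma>0*h\<^sup>2"
proof -
  have "k*(\<Sum>m=1..i. (r m)\<^sup>2/c + (s m)\<^sup>2) = (k*(\<Sum>m=1..i. (r m)\<^sup>2))/c + k*(\<Sum>m=1..i. (s m)\<^sup>2)"
    by (simp add: sum.distrib sum_divide_distrib[symmetric] algebra_simps)
  moreover have "k*(\<Sum>m=1..i. (r m)\<^sup>2) \<le> \<gamma>0*h\<^sup>2" "k*(\<Sum>m=1..i. (s m)\<^sup>2) \<le> \<gamma>0*h\<^sup>2"
    using scaled_sum_subset_le[OF _ _ _ r_sum] scaled_sum_subset_le[OF _ _ _ s_sum] assms k_pos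
    by auto
  ultimately show ?thesis using divide_right_mono[of _ _ c] c_pos by fastforce
qed

lemma linearised_step:
  assumes m: "m \<in> {1..M}" and b_le: "b m \<le> 1"
  shows "((a m)\<^sup>2 - (a (m-1))\<^sup>2)/k + c*(b m)\<^sup>2 \<le> b m * r m + \<gamma>3 * b m * (\<delta> * b (m-1) + K * a m) + (s m)\<^sup>2"
proof -
  have nn: "0 \<le> a m" "0 \<le> b m" "0 \<le> b (m-1)" using nonneg m by auto
  have "c*(b m)\<^sup>2 \<le> \<gamma>1 * rpow (lam + b m) (p - 2) * (b m)\<^sup>2"
    using degenerate_weight_ge_small[of p lam \<Lambda> "b m" \<gamma>1] p lam nn b_le \<gamma> by (simp add: c_def)
  moreover have "rpow (b (m-1)) (1 - \<theta>) * rpow (a m) \<theta> \<le> \<delta> * b (m-1) + K * a m"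
    using rpow_interpolation_le[OF nn(3,1) \<theta> \<delta>_pos] by (simp add: K_def)
  then have "\<gamma>3 * b m * rpow (b (m-1)) (1 - \<theta>) * rpow (a m) \<theta> \<le> \<gamma>3 * b m * (\<delta> * b (m-1) + K * a m)"
    using \<gamma> nn by (simp add: mult.assoc mult_left_mono)
  ultimately show ?thesis using ineq2 m by fastforce
qed

lemma energy_sum_bound:
  assumes n: "n \<le> M" and b_le: "\<forall>m\<in>{1..n}. b m \<le> 1" and i: "i \<le> n"
  shows "(a i)\<^sup>2 + k*(3*c/8)*(\<Sum>m=1..i. (b m)\<^sup>2) \<le> A*h\<^sup>2 + (k*D)*(\<Sum>m=1..i. (a m)\<^sup>2)"
proof -
  have "(a i)\<^sup>2 + k*(c/2)*(\<Sum>m=1..i. (b m)\<^sup>2) - k*(c/8)*(\<Sum>m<i. (b m)\<^sup>2)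
    \<le> (a 0)\<^sup>2 + k*D*(\<Sum>m=1..i. (a m)\<^sup>2) + k*(\<Sum>m=1..i. (r m)\<^sup>2/c + (s m)\<^sup>2)"
  proof (rule sum_energy_steps)
    fix m assume "m \<in> {1..i}"
    then have "m \<in> {1..M}" "b m \<le> 1" using n i b_le by auto
    from energy_step[OF k_pos c_pos \<gamma>(4) \<delta>_def linearised_step[OF this]]
    show "(a m)\<^sup>2 - (a (m-1))\<^sup>2 + k*(c/2)*(b m)\<^sup>2 - k*(c/8)*(b (m-1))\<^sup>2
      \<le> k*D*(a m)\<^sup>2 + k*((r m)\<^sup>2/c + (s m)\<^sup>2)"
      by (simp add: D_def)
  qed
  moreover have "(\<Sum>m<i. (b m)\<^sup>2) \<le> (b 0)\<^sup>2 + (\<Sum>m=1..i. (b m)\<^sup>2)"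
  proof -
    have "(\<Sum>m<i. (b m)\<^sup>2) \<le> (\<Sum>m\<in>insert 0 {1..i}. (b m)\<^sup>2)" by (intro sum_mono2) auto
    then show ?thesis by simp
  qed
  then have "k*(c/8)*(\<Sum>m<i. (b m)\<^sup>2) \<le> k*(c/8)*((b 0)\<^sup>2 + (\<Sum>m=1..i. (b m)\<^sup>2))"
    using k_pos c_pos by (intro mult_left_mono) auto
  moreover have "k*(c/8)*(b 0)\<^sup>2 \<le> (c/8)*(\<gamma>0*h\<^sup>2)"
    using mult_right_mono[OF k_le_1, of "(b 0)\<^sup>2"] b0 c_pos by (simp add: mult.left_commute)
  moreover have "k*(\<Sum>m=1..i. (r m)\<^sup>2/c + (s m)\<^sup>2) \<le> \<gamma>0*h\<^sup>2/c + \<gamma>0*h\<^sup>2"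
    using forcing_sum_le i n by simp
  moreover have "A*h\<^sup>2 = \<gamma>0*h\<^sup>2*2 + (c/8)*(\<gamma>0*h\<^sup>2) + \<gamma>0*h\<^sup>2/c"
    using c_pos by (simp add: A_def field_simps)
  ultimately show ?thesis using a0 by (simp add: algebra_simps)
qed

lemma energy_estimate:
  assumes n: "n \<le> M" and b_le: "\<forall>m\<in>{1..n}. b m \<le> 1" and j: "j \<le> n"
  shows "(a j)\<^sup>2 + k*(3*c/8)*(\<Sum>m=1..j. (b m)\<^sup>2) \<le> A*h\<^sup>2 * exp (2*D*k*real j)"
proof -
  have "A*h\<^sup>2 + (k*D)*(\<Sum>m=1..j. (a m)\<^sup>2) \<le> A*h\<^sup>2 * exp (2*(k*D)*real j)"
  proof (rule discrete_gronwall[OF _ _ _ k_D_le _ j])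
    fix i assume "i \<in> {1..n}"
    moreover have "0 \<le> k*(3*c/8)*(\<Sum>m=1..i. (b m)\<^sup>2)"
      using k_pos c_pos by (simp add: sum_nonneg)
    ultimately show "(a i)\<^sup>2 \<le> A*h\<^sup>2 + (k*D)*(\<Sum>m=1..i. (a m)\<^sup>2)"
      using energy_sum_bound[OF n b_le, of i] by auto
  qed (use A_pos k_pos D_pos in auto)
  then show ?thesis using energy_sum_bound[OF n b_le j] by (simp add: algebra_simps)
qed

lemma energy_bounds:
  assumes n: "n \<le> M" and b_le: "\<forall>m\<in>{1..n}. b m \<le> 1"
  shows "(a n)\<^sup>2 \<le> A*h\<^sup>2*E" and "1 \<le> n \<Longrightarrow> k*(3*c/8)*(b n)\<^sup>2 \<le> A*h\<^sup>2*E"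
proof -
  have "2*D*(k*real n) \<le> 2*D*(k*real M)"
    using n k_pos D_pos by (intro mult_left_mono) auto
  then have "exp (2*D*k*real n) \<le> E" by (simp add: E_def k_mult_M mult.assoc)
  then have "A*h\<^sup>2 * exp (2*D*k*real n) \<le> A*h\<^sup>2*E" using A_pos by (intro mult_left_mono) auto
  with energy_estimate[OF n b_le order_refl]
  have energy: "(a n)\<^sup>2 + k*(3*c/8)*(\<Sum>m=1..n. (b m)\<^sup>2) \<le> A*h\<^sup>2*E" by linarith
  have "0 \<le> k*(3*c/8)*(\<Sum>m=1..n. (b m)\<^sup>2)" using k_pos c_pos by (simp add: sum_nonneg)
  with energy show "(a n)\<^sup>2 \<le> A*h\<^sup>2*E" by linarith
  assume "1 \<le> n"
  then have "(b n)\<^sup>2 \<le> (\<Sum>m=1..n. (b m)\<^sup>2)" by (intro member_le_sum) auto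
  then have "k*(3*c/8)*(b n)\<^sup>2 \<le> k*(3*c/8)*(\<Sum>m=1..n. (b m)\<^sup>2)"
    by (rule mult_left_mono) (use k_pos c_pos in simp)
  with energy show "k*(3*c/8)*(b n)\<^sup>2 \<le> A*h\<^sup>2*E" using zero_le_power2[of "a n"] by linarith
qed

lemma h_sq_div_k_le: "h\<^sup>2/k \<le> \<epsilon>"
  using h_sq_lt k_pos by (simp add: field_simps)

lemma b0_le_\<eta>: "b 0 \<le> \<eta>"
proof -
  have "\<epsilon> * k \<le> \<epsilon>" using mult_left_le[OF k_le_1, of \<epsilon>] \<epsilon>_pos by simp
  then have "h\<^sup>2 \<le> \<epsilon>" using h_sq_lt by linarith
  then have "(b 0)\<^sup>2 \<le> \<gamma>0 * \<epsilon>" using b0 mult_left_mono[of "h\<^sup>2" \<epsilon> \<gamma>0] \<gamma> by linarith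
  also have "\<dots> \<le> \<eta>\<^sup>2" by (rule \<gamma>0_\<epsilon>_le)
  finally show ?thesis by (rule power2_le_imp_le) (use \<eta>_pos in simp)
qed

lemma next_b_le_1:
  assumes n: "n < M" and b_le: "\<forall>m\<in>{1..n}. b m \<le> \<eta>"
  shows "b (Suc n) \<le> 1"
proof (rule le_one_of_energy_ineq)
  have sM: "Suc n \<in> {1..M}" using n by simp
  show "((a (Suc n))\<^sup>2 - (a n)\<^sup>2)/k + \<gamma>1 * rpow (lam + b (Suc n)) (p - 2) * (b (Suc n))\<^sup>2
    \<le> b (Suc n) * r (Suc n) + \<gamma>2 * b n * b (Suc n) + (s (Suc n))\<^sup>2"
    using bspec[OF ineq1 sM] by simp
  show "c * b (Suc n) \<le> \<gamma>1 * rpow (lam + b (Suc n)) (p - 2) * (b (Suc n))\<^sup>2" if "1 < b (Suc n)"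
    using degenerate_weight_ge_large[of p lam \<Lambda> "b (Suc n)" \<gamma>1] that p lam \<gamma> by (simp add: c_def)
  show "0 \<le> b (Suc n)" using nonneg sM by auto
  show "0 < k" "0 < c" by (fact k_pos, fact c_pos)
  have "(r (Suc n))\<^sup>2 \<le> (c/4)\<^sup>2"
    using r_sq_le[of "Suc n"] \<gamma>0_\<epsilon>_le(1) sM by (simp add: power_divide)
  then show "\<bar>r (Suc n)\<bar> \<le> c/4" using c_pos by (simp add: abs_le_square_iff[symmetric])
  have "b n \<le> \<eta>" using b_le b0_le_\<eta> by (cases n) auto
  then show "\<gamma>2 * b n \<le> c/4"
    using mult_left_mono[of "b n" \<eta> \<gamma>2] \<gamma>2_\<eta>_le \<gamma> by linarith
  have "\<forall>m\<in>{1..n}. b m \<le> 1" using b_le \<eta>_le_1 by force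
  then have "(a n)\<^sup>2 \<le> A*h\<^sup>2*E" using energy_bounds(1)[of n] n by simp
  then have "(a n)\<^sup>2/k \<le> A*E*(h\<^sup>2/k)" using k_pos by (simp add: divide_right_mono mult.commute mult.left_commute)
  also have "\<dots> \<le> A*E*\<epsilon>"
    using h_sq_div_k_le A_pos E_ge_1 by (intro mult_left_mono) auto
  finally show "(a n)\<^sup>2/k + (s (Suc n))\<^sup>2 \<le> c/4"
    using s_sq_le[of "Suc n"] sM \<gamma>0_AE_\<epsilon>_le by (simp add: algebra_simps)
qed

lemma next_b_le_\<eta>:
  assumes n: "n < M" and b_le: "\<forall>m\<in>{1..Suc n}. b m \<le> 1"
  shows "b (Suc n) \<le> \<eta>"
proof -
  have "k*(3*c/8)*(b (Suc n))\<^sup>2 \<le> A*E*h\<^sup>2"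
    using energy_bounds(2)[of "Suc n"] n b_le by (simp add: mult.commute mult.left_commute)
  also have "\<dots> \<le> A*E*(\<epsilon>*k)"
    using h_sq_lt A_pos E_ge_1 by (intro mult_left_mono) auto
  finally have "3*c*(b (Suc n))\<^sup>2 \<le> 8*A*E*\<epsilon>" using k_pos by (simp add: field_simps)
  with AE_\<epsilon>_le have "3*c*(b (Suc n))\<^sup>2 \<le> 3*c*\<eta>\<^sup>2" by linarith
  then have "(b (Suc n))\<^sup>2 \<le> \<eta>\<^sup>2" using c_pos by simp
  then show ?thesis by (rule power2_le_imp_le) (use \<eta>_pos in simp)
qed

lemma b_le_\<eta>: "\<forall>m\<in>{1..M}. b m \<le> \<eta>"
proof -
  have "n \<le> M \<Longrightarrow> \<forall>m\<in>{1..n}. b m \<le> \<eta>" for n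
  proof (induction n)
    case (Suc n)
    then have IH: "\<forall>m\<in>{1..n}. b m \<le> \<eta>" by simp
    then have "b (Suc n) \<le> 1" using next_b_le_1 Suc.prems by simp
    with IH \<eta>_le_1 have "\<forall>m\<in>{1..Suc n}. b m \<le> 1" by (force simp: le_Suc_eq)
    then have "b (Suc n) \<le> \<eta>" using next_b_le_\<eta> Suc.prems by simp
    with IH show ?case by (auto simp: le_Suc_eq)
  qed simp
  then show ?thesis by blast
qed

lemma stability_bound:
  "Max (b ` {1..M}) \<le> 1 \<and>
   Max ((\<lambda>m. (a m)\<^sup>2) ` {1..M}) + \<gamma>1 * rpow (lam + \<Lambda>) (p - 2) * k * (\<Sum>m=1..M. (b m)\<^sup>2)
     \<le> \<gamma>4 * h\<^sup>2 * exp (2 * D * k * real M)"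
proof -
  define W where "W = A*h\<^sup>2 * exp (2*D*k*real M)"
  have b_le_1: "\<forall>m\<in>{1..M}. b m \<le> 1" using b_le_\<eta> \<eta>_le_1 by force
  have nonempty: "{1..M} \<noteq> {}" using M_pos by simp
  have a_max: "Max ((\<lambda>m. (a m)\<^sup>2) ` {1..M}) \<le> W"
  proof (subst Max_le_iff, safe)
    fix j assume j: "j \<in> {1..M}"
    have "(a j)\<^sup>2 + k*(3*c/8)*(\<Sum>m=1..j. (b m)\<^sup>2) \<le> A*h\<^sup>2 * exp (2*D*k*real j)"
      using energy_estimate[OF order_refl b_le_1] j by simp
    moreover have "0 \<le> k*(3*c/8)*(\<Sum>m=1..j. (b m)\<^sup>2)" using k_pos c_pos by (simp add: sum_nonneg)
    moreover have "2*D*(k*real j) \<le> 2*D*(k*real M)" using j k_pos D_pos by (intro mult_left_mono) auto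
    then have "A*h\<^sup>2 * exp (2*D*k*real j) \<le> W"
      using A_pos by (simp add: W_def mult.assoc mult_left_mono)
    ultimately show "(a j)\<^sup>2 \<le> W" by linarith
  qed (use nonempty in auto)
  have "(a M)\<^sup>2 + k*(3*c/8)*(\<Sum>m=1..M. (b m)\<^sup>2) \<le> W"
    using energy_estimate[OF order_refl b_le_1 order_refl] by (simp add: W_def)
  then have "k*(3*c/8)*(\<Sum>m=1..M. (b m)\<^sup>2) \<le> W" using zero_le_power2[of "a M"] by linarith
  then have b_sum: "k*(\<Sum>m=1..M. (b m)\<^sup>2) \<le> 8*W/(3*c)" using c_pos by (simp add: field_simps)
  have "rpow (lam + \<Lambda>) (p - 2) \<le> rpow \<Lambda> (p - 2)"
    using p lam \<Lambda> by (intro rpow_antimono_nonpos) auto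
  then have weight: "\<gamma>1 * rpow (lam + \<Lambda>) (p - 2) \<le> \<gamma>1 * \<Lambda> powr (p - 2)"
    using \<gamma> \<Lambda> by (simp add: rpow_def split: if_splits)
  have "\<gamma>1 * rpow (lam + \<Lambda>) (p - 2) * k * (\<Sum>m=1..M. (b m)\<^sup>2)
      = (\<gamma>1 * rpow (lam + \<Lambda>) (p - 2)) * (k * (\<Sum>m=1..M. (b m)\<^sup>2))" by (simp add: mult.assoc)
  also have "\<dots> \<le> (\<gamma>1 * \<Lambda> powr (p - 2)) * (8*W/(3*c))"
    using weight b_sum \<gamma> k_pos by (intro mult_mono) (auto simp: sum_nonneg rpow_def)
  finally have "Max ((\<lambda>m. (a m)\<^sup>2) ` {1..M}) + \<gamma>1 * rpow (lam + \<Lambda>) (p - 2) * k * (\<Sum>m=1..M. (b m)\<^sup>2)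
      \<le> W + (\<gamma>1 * \<Lambda> powr (p - 2)) * (8*W/(3*c))"
    using a_max by linarith
  also have "\<dots> = \<gamma>4 * h\<^sup>2 * exp (2 * D * k * real M)"
    using c_pos by (simp add: W_def \<gamma>4_def field_simps)
  finally show ?thesis using b_le_1 nonempty by simp
qed

end

theorem lemma2:
  fixes p T \<gamma>0 \<gamma>1 \<gamma>2 \<gamma>3 \<Lambda> \<theta> :: real
  assumes "1 < p" "p \<le> 2" "T > 0"
    and "\<gamma>0 > 0" "\<gamma>1 > 0" "\<gamma>2 > 0" "\<gamma>3 > 0" "\<Lambda> > 0"
    and "0 < \<theta>" "\<theta> \<le> 1"
  shows "\<exists>kbar \<gamma>0bar \<gamma>4 \<gamma>5 :: real.
    0 < kbar \<and> kbar \<le> 1 \<and> \<gamma>0bar > 0 \<and> \<gamma>4 > 0 \<and> \<gamma>5 > 0 \<and>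
    (\<forall>(M::nat) k h lam (a::nat \<Rightarrow> real) (b::nat \<Rightarrow> real) (r::nat \<Rightarrow> real) (s::nat \<Rightarrow> real).
      k = T / real M \<and> 0 < k \<and> k < kbar \<and>
      0 < h \<and> h < 1 / sqrt \<gamma>0 \<and> h\<^sup>2 < \<gamma>0bar * k \<and>
      0 \<le> lam \<and> lam \<le> \<Lambda> \<and>
      (\<forall>m\<in>{0..M}. 0 \<le> a m \<and> 0 \<le> b m) \<and>
      (a 0)\<^sup>2 \<le> \<gamma>0 * h\<^sup>2 \<and> (b 0)\<^sup>2 \<le> \<gamma>0 * h\<^sup>2 \<and>
      k * (\<Sum>m=0..M. (r m)\<^sup>2) \<le> \<gamma>0 * h\<^sup>2 \<and>
      k * (\<Sum>m=0..M. (s m)\<^sup>2) \<le> \<gamma>0 * h\<^sup>2 \<and>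
      (\<forall>m\<in>{1..M}.
         ((a m)\<^sup>2 - (a (m-1))\<^sup>2) / k + \<gamma>1 * rpow (lam + b m) (p - 2) * (b m)\<^sup>2
           \<le> b m * r m + \<gamma>2 * b (m-1) * b m + (s m)\<^sup>2) \<and>
      (\<forall>m\<in>{1..M}.
         ((a m)\<^sup>2 - (a (m-1))\<^sup>2) / k + \<gamma>1 * rpow (lam + b m) (p - 2) * (b m)\<^sup>2
           \<le> b m * r m + \<gamma>3 * b m * rpow (b (m-1)) (1 - \<theta>) * rpow (a m) \<theta> + (s m)\<^sup>2)
      \<longrightarrow>
      Max (b ` {1..M}) \<le> 1 \<and>
      Max ((\<lambda>m. (a m)\<^sup>2) ` {1..M}) + \<gamma>1 * rpow (lam + \<Lambda>) (p - 2) * k * (\<Sum>m=1..M. (b m)\<^sup>2)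
        \<le> \<gamma>4 * h\<^sup>2 * exp (2 * \<gamma>5 * k * real M))"
proof -
  interpret stability_constants p T \<gamma>0 \<gamma>1 \<gamma>2 \<gamma>3 \<Lambda> \<theta>
    using assms by unfold_locales
  show ?thesis
    apply (rule exI[of _ kbar], rule exI[of _ \<epsilon>], rule exI[of _ \<gamma>4], rule exI[of _ D])
    apply (intro conjI[OF kbar_pos conjI[OF kbar_le_1 conjI[OF \<epsilon>_pos conjI[OF \<gamma>4_pos conjI[OF D_pos]]]]]
        allI impI)
    subgoal premises data for M k h lam a b r s
    proof -
      interpret stability_data p T \<gamma>0 \<gamma>1 \<gamma>2 \<gamma>3 \<Lambda> \<theta> M k h lam a b r s
        using data by (elim conjE) (unfold_locales; assumption)
      show ?thesis by (rule stability_bound)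
    qed
    done
qed

end
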